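(* Let $m$ be a nonnegative integer and suppose there is a resolvable $(56m+8,8,1)$-BIBD. Let $0\le t\le 8m$ and suppose there exists a nested $(3t+1,4,1)$-BIBD. Then there exists a nested $(v,4,1)$-BIBD for $v=168m+3t+25$.
   Context: A $(v,k,\lambda)$-BIBD is a set $X$ of $v$ points with a multiset $\mathcal{A}$ of $k$-subsets such that every pair of distinct points lies in exactly $\lambda$ blocks (partial: at most $\lambda$). It is resolvable if its blocks can be partitioned into parallel classes, each of which partitions $X$. A $(v,4,1)$-BIBD is nested if there is a map $\phi:\mathcal{A}\to X$ such that $\{A\cup\{\phi(A)\}:A\in\mathcal{A}\}$ is the block multiset of a partial $(v,5,2)$-BIBD on $X$ (in particular $\phi(A)\notin A$). *)

theory Defs
  imports Main "HOL-Library.Multiset"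
begin

definition blocks_ok :: "'a set \<Rightarrow> nat \<Rightarrow> 'a set multiset \<Rightarrow> bool" where
  "blocks_ok X k B \<longleftrightarrow> (\<forall>A\<in>#B. A \<subseteq> X \<and> card A = k)"

definition pair_count :: "'a set multiset \<Rightarrow> 'a \<Rightarrow> 'a \<Rightarrow> nat" where
  "pair_count B x y = size (filter_mset (\<lambda>A. x \<in> A \<and> y \<in> A) B)"

definition is_bibd :: "'a set \<Rightarrow> nat \<Rightarrow> nat \<Rightarrow> nat \<Rightarrow> 'a set multiset \<Rightarrow> bool" where
  "is_bibd X v k l B \<longleftrightarrow> finite X \<and> card X = v \<and> blocks_ok X k B \<and>
     (\<forall>x\<in>X. \<forall>y\<in>X. x \<noteq> y \<longrightarrow> pair_count B x y = l)"

definition is_partial_bibd :: "'a set \<Rightarrow> nat \<Rightarrow> nat \<Rightarrow> nat \<Rightarrow> 'a set multiset \<Rightarrow> bool" where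
  "is_partial_bibd X v k l B \<longleftrightarrow> finite X \<and> card X = v \<and> blocks_ok X k B \<and>
     (\<forall>x\<in>X. \<forall>y\<in>X. x \<noteq> y \<longrightarrow> pair_count B x y \<le> l)"

definition parallel_class :: "'a set \<Rightarrow> 'a set multiset \<Rightarrow> bool" where
  "parallel_class X C \<longleftrightarrow> (\<forall>A\<in>#C. A \<subseteq> X) \<and>
     (\<forall>x\<in>X. size (filter_mset (\<lambda>A. x \<in> A) C) = 1)"

definition resolvable_bibd :: "'a set \<Rightarrow> nat \<Rightarrow> nat \<Rightarrow> nat \<Rightarrow> 'a set multiset \<Rightarrow> bool" where
  "resolvable_bibd X v k l B \<longleftrightarrow> is_bibd X v k l B \<and>
     (\<exists>P :: 'a set multiset multiset. sum_mset P = B \<and> (\<forall>C\<in>#P. parallel_class X C))"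

definition nested_bibd :: "'a set \<Rightarrow> nat \<Rightarrow> 'a set multiset \<Rightarrow> bool" where
  "nested_bibd X v B \<longleftrightarrow> is_bibd X v 4 1 B \<and>
     (\<exists>phi :: 'a set \<Rightarrow> 'a. (\<forall>A\<in>#B. phi A \<in> X) \<and>
        is_partial_bibd X v 5 2 (image_mset (\<lambda>A. insert (phi A) A) B))"

end

theory Submission
  imports Defs
begin

text \<open>
  The resolvable \<open>(56m+8, 8, 1)\<close>-BIBD on \<open>X\<close> has
  \<open>8m+1\<close> parallel classes. Reserve one class \<open>C\<^sub>0\<close>, and add \<open>t\<close> new points, the \<open>j\<close>-th one
  to every block of the \<open>j\<close>-th remaining class. Give every point weight three and add a point
  \<open>\<infinity>\<close>. A block of size 8 or 9 becomes a nested 4-GDD of type \<open>3\<^sup>8\<close> or \<open>3\<^sup>9\<close> on its inflated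
  points; a block \<open>G\<close> of \<open>C\<^sub>0\<close> becomes a nested \<open>(25, 4, 1)\<close>-BIBD on the inflation of \<open>G\<close> plus
  \<open>\<infinity>\<close>, covering the pairs inside the groups; the given nested \<open>(3t+1, 4, 1)\<close>-BIBD goes on the
  inflated new points plus \<open>\<infinity>\<close>. Then every pair of the \<open>3(56m+8+t)+1\<close> points lies in exactly
  one block. Nesting survives the union because each ingredient satisfies the local bound
  "an augmented block covers a pair at most twice as often as a block does".
\<close>

section \<open>Pair counts\<close>

lemma pair_count_add [simp]:
  "pair_count (M + N) x y = pair_count M x y + pair_count N x y"
  by (simp add: pair_count_def)

lemma pair_count_empty [simp]: "pair_count {#} x y = 0"
  by (simp add: pair_count_def)

lemma pair_count_add_mset [simp]:
  "pair_count (add_mset A M) x y = (if x \<in> A \<and> y \<in> A then 1 else 0) + pair_count M x y"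
  by (simp add: pair_count_def)

lemma pair_count_commute: "pair_count M x y = pair_count M y x"
  unfolding pair_count_def by (simp add: conj_commute)

lemma pair_count_sum: "pair_count (\<Sum>i\<in>I. M i) x y = (\<Sum>i\<in>I. pair_count (M i) x y)"
  by (induction I rule: infinite_finite_induct) auto

lemma image_mset_sum_mset_distrib: "image_mset f (\<Sum>i\<in>#I. M i) = (\<Sum>i\<in>#I. image_mset f (M i))"
  by (induction I) auto

lemma image_mset_sum_distrib: "image_mset f (\<Sum>i\<in>I. M i) = (\<Sum>i\<in>I. image_mset f (M i))"
  by (induction I rule: infinite_finite_induct) auto

lemma pair_count_sum_mset_nth:
  "pair_count (\<Sum>\<^sub># (mset Ms)) x y = (\<Sum>j<length Ms. pair_count (Ms ! j) x y)"
proof -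
  have "\<Sum>\<^sub># (mset Ms) = (\<Sum>j<length Ms. Ms ! j)"
    by (simp add: sum_mset_sum_list sum_list_sum_nth atLeast0LessThan)
  then show ?thesis by (simp add: pair_count_sum)
qed

lemma pair_count_outside:
  assumes "\<forall>A\<in>#M. A \<subseteq> X" and "x \<notin> X \<or> y \<notin> X"
  shows "pair_count M x y = 0"
proof -
  have "filter_mset (\<lambda>A. x \<in> A \<and> y \<in> A) M = {#}"
    using assms by (force simp: filter_mset_eq_conv)
  then show ?thesis by (simp add: pair_count_def)
qed

lemma pair_count_image_inj:
  assumes "inj_on f X" and "\<forall>A\<in>#M. A \<subseteq> X" and "x \<in> X" and "y \<in> X"
  shows "pair_count (image_mset ((`) f) M) (f x) (f y) = pair_count M x y"
proof -
  have "filter_mset (\<lambda>A. f x \<in> f ` A \<and> f y \<in> f ` A) M = filter_mset (\<lambda>A. x \<in> A \<and> y \<in> A) M"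
    using assms by (intro filter_mset_cong) (auto simp: inj_on_image_mem_iff)
  then show ?thesis
    by (simp add: pair_count_def filter_mset_image_mset)
qed

lemma pair_count_sum_mset_indicator:
  assumes "\<And>i. i \<in># I \<Longrightarrow> pair_count (M i) x y = (if P i then 1 else 0)"
  shows "pair_count (\<Sum>i\<in>#I. M i) x y = size (filter_mset P I)"
  using assms by (induction I) auto

section \<open>Nested families of blocks\<close>

text \<open>A nested design is kept as the pairs \<open>(A, \<phi> A)\<close> of a block and its nesting point.\<close>
type_synonym 'a nested_family = "('a set \<times> 'a) multiset"

definition nested_blocks :: "'a set \<Rightarrow> 'a nested_family \<Rightarrow> bool" where
  "nested_blocks X N \<longleftrightarrow> (\<forall>(A, p)\<in>#N. A \<subseteq> X \<and> card A = 4 \<and> p \<in> X \<and> p \<notin> A)"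

definition augment :: "'a nested_family \<Rightarrow> 'a set multiset" where
  "augment N = image_mset (\<lambda>(A, p). insert p A) N"

text \<open>
  A local form of the partial \<open>(v, 5, 2)\<close> condition: where the blocks cover a pair once it says
  exactly that, and unlike the global bound it survives adding families on overlapping point sets.
\<close>
definition nesting_bounded :: "'a nested_family \<Rightarrow> bool" where
  "nesting_bounded N \<longleftrightarrow>
     (\<forall>x y. x \<noteq> y \<longrightarrow> pair_count (augment N) x y \<le> 2 * pair_count (image_mset fst N) x y)"

text \<open>
  The groups are the fibres of \<open>g\<close>; for \<open>g = id\<close> this is a nested \<open>(card X, 4, 1)\<close>-BIBD.
  Pairs outside \<open>X\<close> are counted too (they lie in no block), so that families add up.
\<close>
definition nested_gdd :: "'a set \<Rightarrow> ('a \<Rightarrow> 'b) \<Rightarrow> 'a nested_family \<Rightarrow> bool" where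
  "nested_gdd X g N \<longleftrightarrow> nested_blocks X N \<and> nesting_bounded N \<and>
     (\<forall>x y. x \<noteq> y \<longrightarrow>
        pair_count (image_mset fst N) x y = (if x \<in> X \<and> y \<in> X \<and> g x \<noteq> g y then 1 else 0))"

lemma augment_add [simp]: "augment (M + N) = augment M + augment N"
  by (simp add: augment_def)

lemma nested_blocks_empty [simp]: "nested_blocks X {#}"
  by (simp add: nested_blocks_def)

lemma nesting_bounded_empty [simp]: "nesting_bounded {#}"
  by (simp add: nesting_bounded_def augment_def)

lemma nested_blocks_add: "nested_blocks X M \<Longrightarrow> nested_blocks X N \<Longrightarrow> nested_blocks X (M + N)"
  unfolding nested_blocks_def by auto

lemma nested_blocks_sum_mset:
  "(\<And>i. i \<in># I \<Longrightarrow> nested_blocks X (N i)) \<Longrightarrow> nested_blocks X (\<Sum>i\<in>#I. N i)"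
  by (induction I) (auto intro: nested_blocks_add)

lemma nested_blocks_sum:
  "(\<And>i. i \<in> I \<Longrightarrow> nested_blocks X (N i)) \<Longrightarrow> nested_blocks X (\<Sum>i\<in>I. N i)"
  by (induction I rule: infinite_finite_induct) (auto intro: nested_blocks_add)

lemma nested_blocks_mono: "nested_blocks X N \<Longrightarrow> X \<subseteq> Y \<Longrightarrow> nested_blocks Y N"
  unfolding nested_blocks_def by blast

lemma nested_blocks_subset:
  assumes "nested_blocks X N"
  shows "\<forall>A\<in>#image_mset fst N. A \<subseteq> X" and "\<forall>A\<in>#augment N. A \<subseteq> X"
  using assms unfolding nested_blocks_def augment_def by fastforce+

lemma nesting_bounded_add: "nesting_bounded M \<Longrightarrow> nesting_bounded N \<Longrightarrow> nesting_bounded (M + N)"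
  unfolding nesting_bounded_def by (auto intro: add_mono order.trans)

lemma nesting_bounded_sum_mset:
  "(\<And>i. i \<in># I \<Longrightarrow> nesting_bounded (N i)) \<Longrightarrow> nesting_bounded (\<Sum>i\<in>#I. N i)"
  by (induction I) (auto intro: nesting_bounded_add)

lemma nesting_bounded_sum:
  "(\<And>i. i \<in> I \<Longrightarrow> nesting_bounded (N i)) \<Longrightarrow> nesting_bounded (\<Sum>i\<in>I. N i)"
  by (induction I rule: infinite_finite_induct) (auto intro: nesting_bounded_add)

lemma nested_gdd_nested_blocks: "nested_gdd X g N \<Longrightarrow> nested_blocks X N"
  and nested_gdd_nesting_bounded: "nested_gdd X g N \<Longrightarrow> nesting_bounded N"
  by (simp_all add: nested_gdd_def)

lemma nested_gdd_of_nested_bibd: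
  assumes "nested_bibd X v B"
  shows "\<exists>N. nested_gdd X id N"
proof -
  obtain phi where phi: "\<forall>A\<in>#B. phi A \<in> X"
    and partial: "is_partial_bibd X v 5 2 (image_mset (\<lambda>A. insert (phi A) A) B)"
    and bibd: "is_bibd X v 4 1 B"
    using assms unfolding nested_bibd_def by blast
  define N where "N = image_mset (\<lambda>A. (A, phi A)) B"
  have fst_N: "image_mset fst N = B" and augment_N: "augment N = image_mset (\<lambda>A. insert (phi A) A) B"
    by (simp_all add: N_def augment_def multiset.map_comp o_def)
  have "phi A \<notin> A" if "A \<in># B" for A
  proof
    assume "phi A \<in> A"
    then have "card (insert (phi A) A) = 4" using bibd that by (simp add: is_bibd_def blocks_ok_def insert_absorb)
    then show False using partial that by (auto simp: is_partial_bibd_def blocks_ok_def)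
  qed
  then have blocks: "nested_blocks X N"
    using bibd phi by (auto simp: nested_blocks_def N_def is_bibd_def blocks_ok_def)
  have outside: "pair_count (image_mset fst N) x y = 0 \<and> pair_count (augment N) x y = 0"
    if "x \<notin> X \<or> y \<notin> X" for x y
    using that nested_blocks_subset[OF blocks] by (simp add: pair_count_outside)
  have once: "pair_count (image_mset fst N) x y = 1" and twice: "pair_count (augment N) x y \<le> 2"
    if "x \<in> X" "y \<in> X" "x \<noteq> y" for x y
    using bibd partial that unfolding fst_N augment_N is_bibd_def is_partial_bibd_def by auto
  have "nested_gdd X id N"
    unfolding nested_gdd_def nesting_bounded_def
  proof (intro conjI allI impI blocks)
    fix x y :: 'a assume "x \<noteq> y"
    then show "pair_count (image_mset fst N) x y = (if x \<in> X \<and> y \<in> X \<and> id x \<noteq> id y then 1 else 0)"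
      and "pair_count (augment N) x y \<le> 2 * pair_count (image_mset fst N) x y"
      using once twice outside by (cases "x \<in> X \<and> y \<in> X"; simp)+
  qed
  then show ?thesis ..
qed

lemma nested_bibd_of_nested_gdd:
  assumes "finite X" and "card X = v" and gdd: "nested_gdd X id N"
  shows "nested_bibd X v (image_mset fst N)"
proof -
  have blocks: "nested_blocks X N" and bounded: "nesting_bounded N"
    and once: "\<And>x y. x \<in> X \<Longrightarrow> y \<in> X \<Longrightarrow> x \<noteq> y \<Longrightarrow> pair_count (image_mset fst N) x y = 1"
    using gdd unfolding nested_gdd_def by auto
  \<comment> \<open>A block occurring twice would cover its pairs twice, so the nesting point is a function of the block.\<close>
  have unique: "p = q" if "(A, p) \<in># N" and "(A, q) \<in># N" for A p q
  proof (rule ccontr)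
    assume "p \<noteq> q"
    have "card A = 4" and "A \<subseteq> X" using blocks that(1) by (auto simp: nested_blocks_def)
    then obtain x y where xy: "x \<in> A" "y \<in> A" "x \<noteq> y"
      using card_le_Suc0_iff_eq[of A] card.infinite by force
    have "{#(A, p), (A, q)#} \<subseteq># filter_mset (\<lambda>(B, r). x \<in> B \<and> y \<in> B) N"
      using that xy \<open>p \<noteq> q\<close> by (simp add: insert_subset_eq_iff in_diff_count)
    then have "2 \<le> pair_count (image_mset fst N) x y"
      using size_mset_mono by (fastforce simp: pair_count_def filter_mset_image_mset case_prod_unfold)
    with once[of x y] xy \<open>A \<subseteq> X\<close> show False by auto
  qed
  define phi where "phi A = (SOME p. (A, p) \<in># N)" for A
  have phi: "phi A = p" if "(A, p) \<in># N" for A p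
  proof -
    have "(A, phi A) \<in># N" unfolding phi_def by (rule someI[of _ p]) (fact that)
    then show ?thesis using that by (rule unique)
  qed
  have augment_N: "image_mset (\<lambda>A. insert (phi A) A) (image_mset fst N) = augment N"
    unfolding augment_def multiset.map_comp by (rule image_mset_cong) (auto simp: phi)
  have "is_bibd X v 4 1 (image_mset fst N)"
    using assms(1,2) blocks once by (force simp: is_bibd_def blocks_ok_def nested_blocks_def)
  moreover have "\<forall>A\<in>#image_mset fst N. phi A \<in> X"
    using blocks phi by (auto simp: nested_blocks_def)
  moreover have "is_partial_bibd X v 5 2 (augment N)"
  proof -
    have "A \<subseteq> X \<and> card A = 5" if "A \<in># augment N" for A
      using that blocks by (auto simp: augment_def nested_blocks_def card_insert_if card_ge_0_finite)
    moreover have "pair_count (augment N) x y \<le> 2" if "x \<in> X" "y \<in> X" "x \<noteq> y" for x y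
      using bounded once[OF that] that(3) unfolding nesting_bounded_def by fastforce
    ultimately show ?thesis
      using assms(1,2) by (simp add: is_partial_bibd_def blocks_ok_def)
  qed
  ultimately show ?thesis
    unfolding nested_bibd_def augment_N[symmetric] by blast
qed

definition relabel :: "('a \<Rightarrow> 'b) \<Rightarrow> 'a nested_family \<Rightarrow> 'b nested_family" where
  "relabel f N = image_mset (\<lambda>(A, p). (f ` A, f p)) N"

lemma nested_gdd_relabel:
  assumes gdd: "nested_gdd X g N" and inj: "inj_on f X"
    and groups: "\<And>x y. x \<in> X \<Longrightarrow> y \<in> X \<Longrightarrow> h (f x) = h (f y) \<longleftrightarrow> g x = g y"
  shows "nested_gdd (f ` X) h (relabel f N)"
proof -
  have blocks: "nested_blocks X N" and bounded: "nesting_bounded N"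
    and count: "\<And>x y. x \<noteq> y \<Longrightarrow> pair_count (image_mset fst N) x y = (if x \<in> X \<and> y \<in> X \<and> g x \<noteq> g y then 1 else 0)"
    using gdd unfolding nested_gdd_def by auto
  have fst_relabel: "image_mset fst (relabel f N) = image_mset ((`) f) (image_mset fst N)"
    and augment_relabel: "augment (relabel f N) = image_mset ((`) f) (augment N)"
    by (simp_all add: relabel_def augment_def multiset.map_comp o_def case_prod_unfold)
  have "f ` A \<subseteq> f ` X \<and> card (f ` A) = 4 \<and> f p \<in> f ` X \<and> f p \<notin> f ` A" if "(A, p) \<in># N" for A p
  proof -
    have "A \<subseteq> X" "card A = 4" "p \<in> X" "p \<notin> A"
      using blocks that by (auto simp: nested_blocks_def)
    then show ?thesis
      using card_image[OF inj_on_subset[OF inj]] inj_on_image_mem_iff[OF inj] by auto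
  qed
  then have blocks': "nested_blocks (f ` X) (relabel f N)"
    unfolding nested_blocks_def relabel_def by (force simp del: image_subset_iff)
  have sub: "\<forall>A\<in>#image_mset ((`) f) (image_mset fst N). A \<subseteq> f ` X"
    "\<forall>A\<in>#image_mset ((`) f) (augment N). A \<subseteq> f ` X"
    using nested_blocks_subset[OF blocks] by (simp_all add: image_mono)
  have "pair_count (image_mset fst (relabel f N)) u w = (if u \<in> f ` X \<and> w \<in> f ` X \<and> h u \<noteq> h w then 1 else 0)
      \<and> pair_count (augment (relabel f N)) u w \<le> 2 * pair_count (image_mset fst (relabel f N)) u w"
    if "u \<noteq> w" for u w
  proof (cases "u \<in> f ` X \<and> w \<in> f ` X")
    case True
    then obtain x y where x: "x \<in> X" "u = f x" and y: "y \<in> X" "w = f y" by blast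
    then have "x \<noteq> y" using \<open>u \<noteq> w\<close> by blast
    then have "pair_count (augment N) x y \<le> 2 * pair_count (image_mset fst N) x y"
      using bounded unfolding nesting_bounded_def by blast
    then show ?thesis
      using count[OF \<open>x \<noteq> y\<close>] groups[OF x(1) y(1)] x y
        pair_count_image_inj[OF inj nested_blocks_subset(1)[OF blocks] x(1) y(1)]
        pair_count_image_inj[OF inj nested_blocks_subset(2)[OF blocks] x(1) y(1)]
      unfolding fst_relabel augment_relabel by auto
  next
    case False
    then show ?thesis unfolding fst_relabel augment_relabel
      using pair_count_outside[OF sub(1)] pair_count_outside[OF sub(2)] by auto
  qed
  then show ?thesis
    using blocks' unfolding nested_gdd_def nesting_bounded_def by blast
qed

lemma nested_gdd_transfer:
  assumes "nested_gdd X id N" and "finite X" and "finite Y" and "card Y = card X"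
  shows "\<exists>N'. nested_gdd Y id N'"
proof -
  obtain f where f: "bij_betw f X Y" using finite_same_card_bij assms(2-4) by metis
  have "nested_gdd (f ` X) id (relabel f N)"
    using f by (intro nested_gdd_relabel[OF assms(1)]) (auto simp: bij_betw_def inj_on_eq_iff)
  then show ?thesis using f by (auto simp: bij_betw_def)
qed

section \<open>Explicit small designs\<close>

definition table_blocks :: "(nat list \<times> nat) list \<Rightarrow> nat nested_family" where
  "table_blocks L = mset (map (\<lambda>(l, p). (set l, p)) L)"

definition valid_table :: "(nat list \<times> nat) list \<Rightarrow> nat \<Rightarrow> bool" where
  "valid_table L n \<longleftrightarrow>
     list_all (\<lambda>(l, p). distinct (p # l) \<and> length l = 4 \<and> list_all (\<lambda>x. x < n) (p # l)) L"

definition partners :: "(nat list \<times> nat) list \<Rightarrow> nat \<Rightarrow> nat list" where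
  "partners L a = concat (map (\<lambda>(l, p). if a \<in> set l then removeAll a l else []) L)"

definition nest_partners :: "(nat list \<times> nat) list \<Rightarrow> nat \<Rightarrow> nat list" where
  "nest_partners L a = concat (map (\<lambda>(l, p). if a = p then l else if a \<in> set l then [p] else []) L)"

lemma count_mset_distinct: "distinct l \<Longrightarrow> count (mset l) b = (if b \<in> set l then 1 else 0)"
  by (simp add: distinct_count_atmost_1)

lemma pair_count_table_blocks:
  assumes "valid_table L n" and "a \<noteq> b"
  shows "pair_count (image_mset fst (table_blocks L)) a b = count (mset (partners L a)) b"
  using assms(1)
proof (induction L)
  case Nil
  then show ?case by (simp add: table_blocks_def partners_def)
next
  case (Cons lp L)
  obtain l p where lp: "lp = (l, p)" by fastforce
  have "distinct l" and "valid_table L n" using Cons.prems by (auto simp: valid_table_def lp)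
  then show ?case
    using Cons.IH assms(2)
    by (simp add: table_blocks_def partners_def lp pair_count_def count_mset_distinct distinct_removeAll)
qed

lemma pair_count_augment_table_blocks:
  assumes "valid_table L n" and "a \<noteq> b"
  shows "pair_count (augment (table_blocks L)) a b =
    pair_count (image_mset fst (table_blocks L)) a b + count (mset (nest_partners L a)) b"
  using assms(1)
proof (induction L)
  case Nil
  then show ?case by (simp add: table_blocks_def nest_partners_def augment_def)
next
  case (Cons lp L)
  obtain l p where lp: "lp = (l, p)" by fastforce
  have "distinct l" "p \<notin> set l" and "valid_table L n" using Cons.prems by (auto simp: valid_table_def lp)
  then show ?case
    using Cons.IH assms(2)
    by (auto simp: table_blocks_def nest_partners_def augment_def lp pair_count_def count_mset_distinct)
qed

lemma nested_gdd_table: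
  assumes valid: "valid_table L n"
    and partners: "list_all (\<lambda>a. sort (partners L a) = filter (\<lambda>b. g a \<noteq> g b) [0..<n]) [0..<n]"
    and nest_partners:
      "list_all (\<lambda>a. distinct (nest_partners L a) \<and> list_all (\<lambda>b. g a \<noteq> g b) (nest_partners L a)) [0..<n]"
  shows "nested_gdd {..<n} g (table_blocks L)"
proof -
  have blocks: "nested_blocks {..<n} (table_blocks L)"
    using valid by (fastforce simp: valid_table_def nested_blocks_def table_blocks_def list_all_iff distinct_card)
  have once: "pair_count (image_mset fst (table_blocks L)) a b = (if g a \<noteq> g b then 1 else 0)"
    if "a < n" "b < n" "a \<noteq> b" for a b
  proof -
    have "sort (partners L a) = filter (\<lambda>b. g a \<noteq> g b) [0..<n]"
      using partners that(1) by (simp add: list_all_iff)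
    then have "mset (partners L a) = mset (filter (\<lambda>b. g a \<noteq> g b) [0..<n])"
      by (metis mset_sort)
    then show ?thesis
      using pair_count_table_blocks[OF valid that(3)] that by (simp add: count_mset_distinct)
  qed
  have bounded: "pair_count (augment (table_blocks L)) a b \<le> 2 * pair_count (image_mset fst (table_blocks L)) a b"
    if "a < n" "b < n" "a \<noteq> b" for a b
  proof -
    have "count (mset (nest_partners L a)) b \<le> (if g a \<noteq> g b then 1 else 0)"
      using nest_partners that(1) by (auto simp: list_all_iff count_mset_distinct)
    then show ?thesis
      using pair_count_augment_table_blocks[OF valid that(3)] once[OF that] by simp
  qed
  show ?thesis
    unfolding nested_gdd_def nesting_bounded_def
  proof (intro conjI allI impI blocks)
    fix a b :: nat assume "a \<noteq> b"
    then show "pair_count (image_mset fst (table_blocks L)) a b = (if a \<in> {..<n} \<and> b \<in> {..<n} \<and> g a \<noteq> g b then 1 else 0)"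
      and "pair_count (augment (table_blocks L)) a b \<le> 2 * pair_count (image_mset fst (table_blocks L)) a b"
      using once bounded nested_blocks_subset[OF blocks]
      by (cases "a < n \<and> b < n"; auto simp: pair_count_outside)+
  qed
qed

definition nested_bibd_25_table :: "(nat list \<times> nat) list" where
  "nested_bibd_25_table =
    [([0, 1, 5, 12], 2), ([0, 2, 8, 17], 13), ([1, 2, 6, 13], 3), ([1, 3, 9, 18], 14),
     ([2, 3, 7, 14], 4), ([2, 4, 5, 19], 10), ([3, 4, 8, 10], 0), ([3, 0, 6, 15], 11),
     ([4, 0, 9, 11], 1), ([4, 1, 7, 16], 12), ([5, 6, 10, 17], 7), ([5, 7, 13, 22], 18),
     ([6, 7, 11, 18], 8), ([6, 8, 14, 23], 19), ([7, 8, 12, 19], 9), ([7, 9, 10, 24], 15),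
     ([8, 9, 13, 15], 5), ([8, 5, 11, 20], 16), ([9, 5, 14, 16], 6), ([9, 6, 12, 21], 17),
     ([10, 11, 15, 22], 12), ([10, 12, 18, 2], 23), ([11, 12, 16, 23], 13), ([11, 13, 19, 3], 24),
     ([12, 13, 17, 24], 14), ([12, 14, 15, 4], 20), ([13, 14, 18, 20], 10), ([13, 10, 16, 0], 21),
     ([14, 10, 19, 21], 11), ([14, 11, 17, 1], 22), ([15, 16, 20, 2], 17), ([15, 17, 23, 7], 3),
     ([16, 17, 21, 3], 18), ([16, 18, 24, 8], 4), ([17, 18, 22, 4], 19), ([17, 19, 20, 9], 0),
     ([18, 19, 23, 0], 15), ([18, 15, 21, 5], 1), ([19, 15, 24, 1], 16), ([19, 16, 22, 6], 2),
     ([20, 21, 0, 7], 22), ([20, 22, 3, 12], 8), ([21, 22, 1, 8], 23), ([21, 23, 4, 13], 9),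
     ([22, 23, 2, 9], 24), ([22, 24, 0, 14], 5), ([23, 24, 3, 5], 20), ([23, 20, 1, 10], 6),
     ([24, 20, 4, 6], 21), ([24, 21, 2, 11], 7)]"

text \<open>In the two GDD tables, point \<open>i\<close> lies in group \<open>i div 3\<close>.\<close>

definition nested_gdd_3_8_table :: "(nat list \<times> nat) list" where
  "nested_gdd_3_8_table =
    [([0, 3, 7, 9], 18), ([3, 6, 10, 12], 0), ([6, 9, 13, 15], 3), ([9, 12, 16, 18], 6),
     ([0, 12, 15, 19], 9), ([1, 3, 15, 18], 12), ([0, 4, 6, 18], 15), ([0, 5, 13, 21], 20),
     ([3, 8, 16, 21], 2), ([6, 11, 19, 21], 5), ([1, 9, 14, 21], 8), ([4, 12, 17, 21], 11),
     ([7, 15, 20, 21], 14), ([2, 10, 18, 21], 17), ([0, 8, 14, 17], 19), ([3, 11, 17, 20], 1),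
     ([2, 6, 14, 20], 4), ([2, 5, 9, 17], 7), ([5, 8, 12, 20], 10), ([2, 8, 11, 15], 13),
     ([5, 11, 14, 18], 16), ([0, 10, 20, 23], 16), ([2, 3, 13, 23], 19), ([5, 6, 16, 23], 1),
     ([8, 9, 19, 23], 4), ([1, 11, 12, 23], 7), ([4, 14, 15, 23], 10), ([7, 17, 18, 23], 13),
     ([0, 11, 16, 22], 8), ([3, 14, 19, 22], 11), ([1, 6, 17, 22], 14), ([4, 9, 20, 22], 17),
     ([2, 7, 12, 22], 20), ([5, 10, 15, 22], 2), ([8, 13, 18, 22], 5), ([1, 4, 8, 10], 18),
     ([4, 7, 11, 13], 0), ([7, 10, 14, 16], 3), ([10, 13, 17, 19], 6), ([1, 13, 16, 20], 9),
     ([2, 4, 16, 19], 12), ([1, 5, 7, 19], 15)]"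

definition nested_gdd_3_9_table :: "(nat list \<times> nat) list" where
  "nested_gdd_3_9_table =
    [([0, 3, 20, 25], 6), ([1, 3, 6, 23], 9), ([4, 6, 9, 26], 12), ([2, 7, 9, 12], 15),
     ([5, 10, 12, 15], 18), ([8, 13, 15, 18], 21), ([11, 16, 18, 21], 24), ([14, 19, 21, 24], 0),
     ([0, 17, 22, 24], 3), ([0, 4, 10, 19], 26), ([3, 7, 13, 22], 2), ([6, 10, 16, 25], 5),
     ([1, 9, 13, 19], 8), ([4, 12, 16, 22], 11), ([7, 15, 19, 25], 14), ([1, 10, 18, 22], 17),
     ([4, 13, 21, 25], 20), ([1, 7, 16, 24], 23), ([0, 5, 7, 11], 20), ([3, 8, 10, 14], 23),
     ([6, 11, 13, 17], 26), ([9, 14, 16, 20], 2), ([12, 17, 19, 23], 5), ([15, 20, 22, 26], 8),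
     ([2, 18, 23, 25], 11), ([1, 5, 21, 26], 14), ([2, 4, 8, 24], 17), ([0, 6, 14, 18], 4),
     ([3, 9, 17, 21], 7), ([6, 12, 20, 24], 10), ([0, 9, 15, 23], 13), ([3, 12, 18, 26], 16),
     ([2, 6, 15, 21], 19), ([5, 9, 18, 24], 22), ([0, 8, 12, 21], 25), ([3, 11, 15, 24], 1),
     ([0, 13, 16, 26], 7), ([2, 3, 16, 19], 10), ([5, 6, 19, 22], 13), ([8, 9, 22, 25], 16),
     ([1, 11, 12, 25], 19), ([1, 4, 14, 15], 22), ([4, 7, 17, 18], 25), ([7, 10, 20, 21], 1),
     ([10, 13, 23, 24], 4), ([1, 8, 17, 20], 12), ([4, 11, 20, 23], 15), ([7, 14, 23, 26], 18),
     ([2, 10, 17, 26], 21), ([2, 5, 13, 20], 24), ([5, 8, 16, 23], 0), ([8, 11, 19, 26], 3),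
     ([2, 11, 14, 22], 6), ([5, 14, 17, 25], 9)]"

lemma nested_bibd_25: "nested_gdd {..<25} id (table_blocks nested_bibd_25_table)"
  by (rule nested_gdd_table) code_simp+

lemma nested_gdd_3_8: "nested_gdd {..<24} (\<lambda>a. a div 3) (table_blocks nested_gdd_3_8_table)"
  by (rule nested_gdd_table) code_simp+

lemma nested_gdd_3_9: "nested_gdd {..<27} (\<lambda>a. a div 3) (table_blocks nested_gdd_3_9_table)"
  by (rule nested_gdd_table) code_simp+

section \<open>Inflation by weight three\<close>

definition inflate :: "'b set \<Rightarrow> ('b \<times> nat) option set" where
  "inflate Z = Some ` (Z \<times> {..<3})"

lemma mem_inflate [simp]:
  "Some (z, a) \<in> inflate Z \<longleftrightarrow> z \<in> Z \<and> a < 3"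
  "None \<notin> inflate Z"
  by (auto simp: inflate_def)

lemma finite_inflate: "finite Z \<Longrightarrow> finite (inflate Z)"
  by (simp add: inflate_def)

lemma card_inflate: "finite Z \<Longrightarrow> card (inflate Z) = 3 * card Z"
  by (simp add: inflate_def card_image card_cartesian_product)

lemma nested_gdd_inflate:
  assumes "finite Z" and gdd: "nested_gdd {..<3 * card Z} (\<lambda>i. i div 3) N"
  shows "\<exists>N'. nested_gdd (inflate Z) (map_option fst) N'"
proof -
  obtain h where h: "bij_betw h {..<card Z} Z"
    using ex_bij_betw_nat_finite[OF assms(1)] by (auto simp: atLeast0LessThan)
  define f where "f i = Some (h (i div 3), i mod 3)" for i
  have groups: "map_option fst (f i) = map_option fst (f j) \<longleftrightarrow> i div 3 = j div 3"
    if "i \<in> {..<3 * card Z}" "j \<in> {..<3 * card Z}" for i j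
    using that bij_betw_imp_inj_on[OF h] by (auto simp: f_def inj_on_eq_iff)
  have inj: "inj_on f {..<3 * card Z}"
  proof (rule inj_onI)
    fix i j assume "i \<in> {..<3 * card Z}" "j \<in> {..<3 * card Z}" "f i = f j"
    then have "i div 3 = j div 3" and "i mod 3 = j mod 3"
      using groups by (auto simp: f_def)
    then show "i = j" by (metis div_mod_decomp)
  qed
  have image: "f ` {..<3 * card Z} = inflate Z"
  proof (intro equalityI subsetI)
    fix u assume "u \<in> f ` {..<3 * card Z}"
    then show "u \<in> inflate Z" using bij_betw_apply[OF h] by (auto simp: f_def)
  next
    fix u assume "u \<in> inflate Z"
    then obtain z a where u: "u = Some (z, a)" "z \<in> Z" "a < 3" by (auto simp: inflate_def)
    moreover have "z \<in> h ` {..<card Z}" using bij_betw_imp_surj_on[OF h] u(2) by simp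
    then obtain c where c: "c < card Z" "h c = z" by auto
    then have "3 * c + a \<in> {..<3 * card Z}" and "f (3 * c + a) = u" using u by (auto simp: f_def)
    then show "u \<in> f ` {..<3 * card Z}" by blast
  qed
  show ?thesis
    using nested_gdd_relabel[OF gdd inj, of "map_option fst"] groups image by auto
qed

lemma ex_nested_gdd_inflate:
  assumes "finite Z" and "card Z = 8 \<or> card Z = 9"
  shows "\<exists>N. nested_gdd (inflate Z) (map_option fst) N"
  using assms nested_gdd_inflate nested_gdd_3_8 nested_gdd_3_9 by fastforce

lemma ex_nested_bibd_insert_inflate:
  assumes "finite Z" and "card Z = 8"
  shows "\<exists>N. nested_gdd (insert None (inflate Z)) id N"
  by (rule nested_gdd_transfer[OF nested_bibd_25])
    (use assms in \<open>simp_all add: finite_inflate card_inflate\<close>)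

section \<open>Parallel classes\<close>

lemma sum_pair_count:
  assumes "finite Y"
  shows "(\<Sum>y\<in>Y. pair_count B x y) = (\<Sum>A\<in>#B. if x \<in> A then card (A \<inter> Y) else 0)"
proof (induction B)
  case empty
  then show ?case by simp
next
  case (add A B)
  have "(\<Sum>y\<in>Y. pair_count (add_mset A B) x y)
      = (\<Sum>y\<in>Y. if x \<in> A \<and> y \<in> A then 1 else 0) + (\<Sum>y\<in>Y. pair_count B x y)"
    by (simp add: sum.distrib)
  also have "(\<Sum>y\<in>Y. if x \<in> A \<and> y \<in> A then 1 else 0 :: nat) = (if x \<in> A then card (A \<inter> Y) else 0)"
    using assms by (simp add: sum.If_cases Int_commute)
  finally show ?case using add.IH by simp
qed

lemma bibd_replication:
  assumes bibd: "is_bibd X v k l B" and "x \<in> X"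
  shows "(k - 1) * size (filter_mset (\<lambda>A. x \<in> A) B) = l * (v - 1)"
proof -
  have fin: "finite X" and "card X = v" and blocks: "blocks_ok X k B"
    and pairs: "\<And>y. y \<in> X - {x} \<Longrightarrow> pair_count B x y = l"
    using bibd \<open>x \<in> X\<close> unfolding is_bibd_def by auto
  have "l * (v - 1) = (\<Sum>y\<in>X - {x}. pair_count B x y)"
    using \<open>card X = v\<close> \<open>x \<in> X\<close> fin by (simp add: pairs)
  also have "\<dots> = (\<Sum>A\<in>#B. if x \<in> A then card (A \<inter> (X - {x})) else 0)"
    using fin by (simp add: sum_pair_count)
  also have "\<dots> = (\<Sum>A\<in>#B. if x \<in> A then k - 1 else 0)"
  proof (rule arg_cong[where f = sum_mset], rule image_mset_cong)
    fix A assume "A \<in># B"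
    then have "A \<subseteq> X" "card A = k" using blocks by (auto simp: blocks_ok_def)
    moreover have "finite A" using \<open>A \<subseteq> X\<close> fin finite_subset by blast
    ultimately show "(if x \<in> A then card (A \<inter> (X - {x})) else 0) = (if x \<in> A then k - 1 else 0)"
    proof -
      have "A \<inter> (X - {x}) = A - {x}" using \<open>A \<subseteq> X\<close> by blast
      then show ?thesis using \<open>card A = k\<close> \<open>finite A\<close> by (simp add: card_Diff_singleton)
    qed
  qed
  also have "\<dots> = (k - 1) * size (filter_mset (\<lambda>A. x \<in> A) B)"
    by (induction B) auto
  finally show ?thesis by simp
qed

lemma size_filter_sum_parallel_classes:
  assumes "\<forall>C\<in>#P. parallel_class X C" and "x \<in> X"
  shows "size (filter_mset (\<lambda>A. x \<in> A) (\<Sum>\<^sub># P)) = size P"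
  using assms by (induction P) (auto simp: parallel_class_def)

lemma resolution_size:
  assumes "is_bibd X v k l (\<Sum>\<^sub># P)" and "\<forall>C\<in>#P. parallel_class X C" and "X \<noteq> {}"
  shows "(k - 1) * size P = l * (v - 1)"
proof -
  obtain x where "x \<in> X" using assms(3) by blast
  then show ?thesis
    using bibd_replication[OF assms(1)] size_filter_sum_parallel_classes[OF assms(2)] by metis
qed

section \<open>The weighting construction\<close>

text \<open>
  \<open>Inl x\<close> is a point of the resolvable design, \<open>Inr i\<close> the \<open>i\<close>-th new point; the second
  component is the copy index of the inflation, and \<open>None\<close> is \<open>\<infinity>\<close>.
\<close>
type_synonym 'b inflated_point = "(('b + nat) \<times> nat) option"

lemma Inl_Inr_image_mem_iff [simp]:
  "Inl x \<in> Inl ` A \<longleftrightarrow> x \<in> A" "Inr i \<in> Inr ` I \<longleftrightarrow> i \<in> I"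
  "Inr i \<notin> Inl ` A" "Inl x \<notin> Inr ` I"
  by auto

context
  fixes X :: "'b set" and C0 :: "'b set multiset" and Cs :: "'b set multiset list" and t :: nat
begin

abbreviation points :: "'b inflated_point set" where
  "points \<equiv> insert None (inflate (Inl ` X \<union> Inr ` {..<t}))"

abbreviation fill_points :: "'b set \<Rightarrow> 'b inflated_point set" where
  "fill_points G \<equiv> insert None (inflate (Inl ` G))"

abbreviation infinite_points :: "'b inflated_point set" where
  "infinite_points \<equiv> insert None (inflate (Inr ` {..<t}))"

abbreviation gdd_points :: "nat \<Rightarrow> 'b set \<Rightarrow> 'b inflated_point set" where
  "gdd_points j A \<equiv> inflate (Inl ` A \<union> Inr ` ({j} \<inter> {..<t}))"

text \<open>
  The blocks of \<open>C0\<close> are filled with nested \<open>(25, 4, 1)\<close>-BIBDs; a block \<open>A\<close> of the class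
  \<open>Cs ! j\<close> is extended by the new point \<open>Inr j\<close> when \<open>j < t\<close>, and then carries a nested GDD.
\<close>
context
  fixes F :: "'b set \<Rightarrow> 'b inflated_point nested_family"
    and E :: "nat \<Rightarrow> 'b set \<Rightarrow> 'b inflated_point nested_family"
    and NB :: "'b inflated_point nested_family"
  assumes pairs_once: "\<And>x y. x \<in> X \<Longrightarrow> y \<in> X \<Longrightarrow> x \<noteq> y \<Longrightarrow> pair_count (C0 + \<Sum>\<^sub># (mset Cs)) x y = 1"
    and C0_parallel: "parallel_class X C0"
    and Cs_parallel: "\<And>C. C \<in> set Cs \<Longrightarrow> parallel_class X C"
    and t_le: "t \<le> length Cs"
    and F: "\<And>G. G \<in># C0 \<Longrightarrow> nested_gdd (fill_points G) id (F G)"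
    and E: "\<And>j A. j < length Cs \<Longrightarrow> A \<in># Cs ! j \<Longrightarrow> nested_gdd (gdd_points j A) (map_option fst) (E j A)"
    and NB: "nested_gdd infinite_points id NB"
begin

abbreviation assembled :: "'b inflated_point nested_family" where
  "assembled \<equiv> (\<Sum>G\<in>#C0. F G) + NB + (\<Sum>j<length Cs. \<Sum>A\<in>#Cs ! j. E j A)"

lemma class_block_subset: "A \<in># C0 \<Longrightarrow> A \<subseteq> X" "j < length Cs \<Longrightarrow> A \<in># Cs ! j \<Longrightarrow> A \<subseteq> X"
  using C0_parallel Cs_parallel[OF nth_mem] by (auto simp: parallel_class_def)

lemma class_degree:
  "x \<in> X \<Longrightarrow> size (filter_mset (\<lambda>A. x \<in> A) C0) = 1"
  "j < length Cs \<Longrightarrow> x \<in> X \<Longrightarrow> size (filter_mset (\<lambda>A. x \<in> A) (Cs ! j)) = 1"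
  using C0_parallel Cs_parallel[OF nth_mem] by (auto simp: parallel_class_def)

lemma assembled_blocks: "nested_blocks points assembled"
proof -
  have fill: "nested_blocks points (F G)" if "G \<in># C0" for G
    using class_block_subset(1)[OF that]
    by (intro nested_blocks_mono[OF nested_gdd_nested_blocks[OF F[OF that]]]) (auto simp: inflate_def)
  have gdd: "nested_blocks points (E j A)" if "j < length Cs" "A \<in># Cs ! j" for j A
    using class_block_subset(2)[OF that]
    by (intro nested_blocks_mono[OF nested_gdd_nested_blocks[OF E[OF that]]]) (auto simp: inflate_def)
  have inf: "nested_blocks points NB"
    by (intro nested_blocks_mono[OF nested_gdd_nested_blocks[OF NB]]) (auto simp: inflate_def)
  show ?thesis
    by (intro nested_blocks_add nested_blocks_sum nested_blocks_sum_mset fill gdd inf) auto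
qed

lemma assembled_bounded: "nesting_bounded assembled"
  by (intro nesting_bounded_add nesting_bounded_sum nesting_bounded_sum_mset
      nested_gdd_nesting_bounded[OF F] nested_gdd_nesting_bounded[OF E] nested_gdd_nesting_bounded[OF NB]) auto

lemma pair_count_assembled:
  assumes "u \<noteq> w"
  shows "pair_count (image_mset fst assembled) u w =
    size (filter_mset (\<lambda>G. u \<in> fill_points G \<and> w \<in> fill_points G) C0)
    + (if u \<in> infinite_points \<and> w \<in> infinite_points then 1 else 0)
    + (\<Sum>j<length Cs. size (filter_mset
         (\<lambda>A. u \<in> gdd_points j A \<and> w \<in> gdd_points j A \<and> map_option fst u \<noteq> map_option fst w) (Cs ! j)))"
proof -
  have "pair_count (image_mset fst (\<Sum>G\<in>#C0. F G)) u w
      = size (filter_mset (\<lambda>G. u \<in> fill_points G \<and> w \<in> fill_points G) C0)"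
    unfolding image_mset_sum_mset_distrib
    by (rule pair_count_sum_mset_indicator) (use F assms in \<open>simp add: nested_gdd_def\<close>)
  moreover have "pair_count (image_mset fst (\<Sum>A\<in>#Cs ! j. E j A)) u w = size (filter_mset
         (\<lambda>A. u \<in> gdd_points j A \<and> w \<in> gdd_points j A \<and> map_option fst u \<noteq> map_option fst w) (Cs ! j))"
    if "j < length Cs" for j
    unfolding image_mset_sum_mset_distrib
    by (rule pair_count_sum_mset_indicator) (use E[OF that] assms in \<open>simp add: nested_gdd_def\<close>)
  moreover have "pair_count (image_mset fst NB) u w = (if u \<in> infinite_points \<and> w \<in> infinite_points then 1 else 0)"
    using NB assms by (simp add: nested_gdd_def)
  ultimately show ?thesis
    by (simp add: image_mset_sum_distrib pair_count_sum)
qed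

lemma pair_count_assembled_base_base:
  assumes "x \<in> X" "y \<in> X" "a < 3" "b < 3" "(x, a) \<noteq> (y, b)"
  shows "pair_count (image_mset fst assembled) (Some (Inl x, a)) (Some (Inl y, b)) = 1"
proof -
  have count: "pair_count (image_mset fst assembled) (Some (Inl x, a)) (Some (Inl y, b)) =
      size (filter_mset (\<lambda>G. x \<in> G \<and> y \<in> G) C0)
      + (\<Sum>j<length Cs. size (filter_mset (\<lambda>A. x \<in> A \<and> y \<in> A \<and> x \<noteq> y) (Cs ! j)))"
    using assms by (subst pair_count_assembled) auto
  show ?thesis
  proof (cases "x = y")
    case True
    then show ?thesis using count class_degree(1)[OF assms(1)] by simp
  next
    case False
    then have "pair_count (image_mset fst assembled) (Some (Inl x, a)) (Some (Inl y, b))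
        = pair_count C0 x y + (\<Sum>j<length Cs. pair_count (Cs ! j) x y)"
      using count by (simp add: pair_count_def)
    also have "\<dots> = pair_count (C0 + \<Sum>\<^sub># (mset Cs)) x y"
      by (simp add: pair_count_sum_mset_nth)
    finally show ?thesis using pairs_once assms False by simp
  qed
qed

lemma pair_count_assembled_base_infinite:
  assumes "x \<in> X" "i < t" "a < 3" "b < 3"
  shows "pair_count (image_mset fst assembled) (Some (Inl x, a)) (Some (Inr i, b)) = 1"
proof -
  have "pair_count (image_mset fst assembled) (Some (Inl x, a)) (Some (Inr i, b)) =
      (\<Sum>j<length Cs. size (filter_mset (\<lambda>A. x \<in> A \<and> i = j) (Cs ! j)))"
    using assms by (subst pair_count_assembled) auto
  also have "\<dots> = (\<Sum>j<length Cs. if j = i then size (filter_mset (\<lambda>A. x \<in> A) (Cs ! j)) else 0)"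
    by (rule sum.cong) auto
  also have "\<dots> = 1"
    using assms t_le class_degree(2)[OF _ assms(1)] by simp
  finally show ?thesis .
qed

lemma pair_count_assembled_base_None:
  assumes "x \<in> X" "a < 3"
  shows "pair_count (image_mset fst assembled) (Some (Inl x, a)) None = 1"
  using assms class_degree(1)[OF assms(1)] by (subst pair_count_assembled) auto

lemma pair_count_assembled_infinite:
  assumes "u \<in> infinite_points" "w \<in> infinite_points" "u \<noteq> w"
  shows "pair_count (image_mset fst assembled) u w = 1"
proof -
  \<comment> \<open>The other ingredients meet \<open>infinite_points\<close> in \<open>None\<close> or in the copies of one new point.\<close>
  have "\<not> (u \<in> fill_points G \<and> w \<in> fill_points G)" for G
    using assms by (auto simp: inflate_def)
  moreover have "\<not> (u \<in> gdd_points j A \<and> w \<in> gdd_points j A \<and> map_option fst u \<noteq> map_option fst w)" for j A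
    using assms by (auto simp: inflate_def)
  ultimately show ?thesis
    using assms by (subst pair_count_assembled) auto
qed

lemma pair_count_assembled_base:
  assumes "x \<in> X" "a < 3" "w \<in> points" "w \<noteq> Some (Inl x, a)"
  shows "pair_count (image_mset fst assembled) (Some (Inl x, a)) w = 1"
proof -
  consider "w = None" | y b where "w = Some (Inl y, b)" "y \<in> X" "b < 3"
    | i b where "w = Some (Inr i, b)" "i < t" "b < 3"
    using assms(3) by (auto simp: inflate_def)
  then show ?thesis
    by cases (use assms pair_count_assembled_base_base pair_count_assembled_base_infinite
        pair_count_assembled_base_None in auto)
qed

lemma nested_gdd_assembled: "nested_gdd points id assembled"
  unfolding nested_gdd_def
proof (intro conjI allI impI assembled_blocks assembled_bounded)
  fix u w :: "'b inflated_point" assume "u \<noteq> w"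
  show "pair_count (image_mset fst assembled) u w = (if u \<in> points \<and> w \<in> points \<and> id u \<noteq> id w then 1 else 0)"
  proof (cases "u \<in> points \<and> w \<in> points")
    case True
    consider "u \<in> infinite_points" "w \<in> infinite_points"
      | x a where "x \<in> X" "a < 3" "u = Some (Inl x, a)"
      | x a where "x \<in> X" "a < 3" "w = Some (Inl x, a)"
      using True by (auto simp: inflate_def)
    then show ?thesis
    proof cases
      case 1
      then show ?thesis using pair_count_assembled_infinite[OF 1 \<open>u \<noteq> w\<close>] True \<open>u \<noteq> w\<close> by simp
    next
      case 2
      then show ?thesis using pair_count_assembled_base True \<open>u \<noteq> w\<close> by simp
    next
      case 3
      then have "pair_count (image_mset fst assembled) w u = 1"
        using pair_count_assembled_base True \<open>u \<noteq> w\<close> by simp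
      then show ?thesis using True \<open>u \<noteq> w\<close> by (simp add: pair_count_commute[of _ u w])
    qed
  next
    case False
    have "pair_count (image_mset fst assembled) u w = 0"
      by (rule pair_count_outside[OF nested_blocks_subset(1)[OF assembled_blocks]]) (use False in blast)
    moreover have "\<not> (u \<in> points \<and> w \<in> points \<and> id u \<noteq> id w)" using False by blast
    ultimately show ?thesis by (simp only: if_False)
  qed
qed

end

end

lemma finite_points: "finite X \<Longrightarrow> finite (points X t)"
  and finite_infinite_points: "finite (infinite_points t)"
  by (simp_all add: finite_inflate)

lemma card_points: "finite X \<Longrightarrow> card (points X t) = 3 * (card X + t) + 1"
  and card_infinite_points: "card (infinite_points t) = 3 * t + 1"
proof -
  assume "finite X"
  then have "card (Inl ` X \<union> Inr ` {..<t}) = card X + t"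
    by (subst card_Un_disjoint) (auto simp: card_image)
  then show "card (points X t) = 3 * (card X + t) + 1"
    using \<open>finite X\<close> by (simp add: finite_inflate card_inflate)
next
  show "card (infinite_points t) = 3 * t + 1"
    by (simp add: finite_inflate card_inflate card_image)
qed

lemma ex_nested_gdd_weighting:
  fixes X :: "'b set" and NB :: "'b inflated_point nested_family"
  assumes bibd: "is_bibd X v 8 1 (C0 + \<Sum>\<^sub># (mset Cs))"
    and C0: "parallel_class X C0" and Cs: "\<forall>C\<in>set Cs. parallel_class X C"
    and t_le: "t \<le> length Cs"
    and NB: "nested_gdd (infinite_points t) id NB"
  shows "\<exists>N. nested_gdd (points X t) id N"
proof -
  have block: "finite A \<and> card A = 8" if "A \<in># C0 + \<Sum>\<^sub># (mset Cs)" for A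
  proof -
    have "card A = 8" using bibd that unfolding is_bibd_def blocks_ok_def by blast
    then show ?thesis using card_ge_0_finite by force
  qed
  have "\<exists>N. nested_gdd (fill_points G) id N" if "G \<in># C0" for G
    using block[of G] that by (intro ex_nested_bibd_insert_inflate) (auto simp: card_image)
  then obtain F where F: "\<And>G. G \<in># C0 \<Longrightarrow> nested_gdd (fill_points G) id (F G)"
    by metis
  have "\<exists>N. nested_gdd (gdd_points t j A) (map_option fst) N"
    if "j < length Cs" "A \<in># Cs ! j" for j A
  proof -
    have "A \<in># C0 + \<Sum>\<^sub># (mset Cs)" using that by (auto simp: in_Union_mset_iff)
    then have "finite A" "card A = 8" using block by auto
    moreover have "card (Inl ` A \<union> Inr ` ({j} \<inter> {..<t})) = card A + card ({j} \<inter> {..<t})"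
      using \<open>finite A\<close> by (subst card_Un_disjoint) (auto simp: card_image)
    ultimately show ?thesis
      by (intro ex_nested_gdd_inflate) (auto simp: Int_insert_left)
  qed
  then obtain E where E: "\<And>j A. j < length Cs \<Longrightarrow> A \<in># Cs ! j \<Longrightarrow>
      nested_gdd (gdd_points t j A) (map_option fst) (E j A)"
    by metis
  have "nested_gdd (points X t) id (assembled C0 Cs F E NB)"
    by (rule nested_gdd_assembled[where F = F and E = E and NB = NB])
      (use bibd C0 Cs t_le F E NB in \<open>auto simp: is_bibd_def\<close>)
  then show ?thesis ..
qed

lemma ex_nested_gdd_of_nested_bibd_card:
  assumes "nested_bibd Y v D" and "finite S" and "card S = v"
  shows "\<exists>N. nested_gdd S id N"
proof -
  obtain N where "nested_gdd Y id N" using nested_gdd_of_nested_bibd[OF assms(1)] ..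
  moreover have "finite Y" "card Y = v" using assms(1) by (auto simp: nested_bibd_def is_bibd_def)
  ultimately show ?thesis using nested_gdd_transfer assms(2,3) by metis
qed

lemma ex_nested_bibd_nat:
  assumes "nested_gdd S id N" and "finite S"
  shows "\<exists>(X :: nat set) B. nested_bibd X (card S) B"
proof -
  obtain N' where "nested_gdd {..<card S} id N'"
    using nested_gdd_transfer[OF assms, of "{..<card S}"] by auto
  then show ?thesis using nested_bibd_of_nested_gdd by fastforce
qed

theorem mainTheorem12:
  fixes m t :: nat
  assumes "\<exists>(X :: nat set) B. resolvable_bibd X (56*m+8) 8 1 B"
    and "t \<le> 8*m"
    and "\<exists>(X :: nat set) B. nested_bibd X (3*t+1) B"
  shows "\<exists>(X :: nat set) B. nested_bibd X (168*m+3*t+25) B"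
proof -
  obtain X :: "nat set" and P where bibd: "is_bibd X (56*m+8) 8 1 (\<Sum>\<^sub># P)"
    and classes: "\<forall>C\<in>#P. parallel_class X C"
    using assms(1) unfolding resolvable_bibd_def by blast
  have X: "finite X" "card X = 56*m+8" using bibd by (auto simp: is_bibd_def)
  then have "size P = 8*m+1" using resolution_size[OF bibd classes] by fastforce
  moreover obtain Ps where "mset Ps = P" using ex_mset by blast
  ultimately obtain C0 Cs where P: "P = mset (C0 # Cs)" and "length Cs = 8*m"
    by (cases Ps) auto
  obtain NB :: "nat inflated_point nested_family" where NB: "nested_gdd (infinite_points t) id NB"
    using assms(3) ex_nested_gdd_of_nested_bibd_card[OF _ finite_infinite_points card_infinite_points]
    by blast
  have "\<exists>N. nested_gdd (points X t) id N"
    by (rule ex_nested_gdd_weighting[OF _ _ _ _ NB])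
      (use bibd classes assms(2) \<open>length Cs = 8*m\<close> in \<open>auto simp: P\<close>)
  then obtain N where N: "nested_gdd (points X t) id N" ..
  have "card (points X t) = 168*m+3*t+25" using card_points[OF X(1), of t] X(2) by simp
  with ex_nested_bibd_nat[OF N finite_points[OF X(1)]] show ?thesis by simp
qed

end
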